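(* Let $\eta,\theta\in(0,1]$, let $k\ge2$, and let $C_{\rm out}\subseteq[Q]^n$ be a code of relative Hamming distance at least $1-\eta$. Let $C_{\rm in}\subseteq[k]^m$ be a code with $nQ$ codewords $e(i,\alpha)$, one for each $(i,\alpha)\in[n]\times[Q]$, such that for any two distinct codewords $c_1,c_2\in C_{\rm in}$ and any common subsequence $s$ of $c_1,c_2$ we have $\operatorname{span}s\ge(k+\sqrt k)\operatorname{len}s-\theta km$. Let $C_{\rm concat}\subseteq[k]^N$, $N=nm$, consist of, for each $c=(c_1,\dots,c_n)\in C_{\rm out}$, the word $e(1,c_1)e(2,c_2)\cdots e(n,c_n)$. Then \[\mathrm{LCS}(C_{\rm concat})\le\left(\frac2{k+\sqrt k}+2\theta+\eta\right)N.\]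
   Context: The relative Hamming distance of a code of block length $n$ is the minimum over distinct codewords $c,\tilde c$ of $\Delta(c,\tilde c)/n$, where $\Delta$ is the number of positions where they differ. Symbols are distinguishable positions. A common subsequence of words $w_1,w_2$ is a pair $s=(w_1',w_2')$ of subsequences equal as words; $\operatorname{len}s$ is their common length; the span of $w'$ in $w$ is the length of the shortest block of consecutive symbols of $w$ containing $w'$, and $\operatorname{span}s=\operatorname{span}_{w_1}w_1'+\operatorname{span}_{w_2}w_2'$. $\mathrm{LCS}(C)$ is the maximum over distinct codewords of the length of a longest common subsequence. *)

theory Defs
  imports Complex_Main
begin

definition words :: "nat \<Rightarrow> nat \<Rightarrow> nat list set" where
  "words q n = {w. length w = n \<and> set w \<subseteq> {0..<q}}"

definition hamming :: "nat list \<Rightarrow> nat list \<Rightarrow> nat" where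
  "hamming c d = card {i. i < length c \<and> c ! i \<noteq> d ! i}"

definition rel_dist_ge :: "nat list set \<Rightarrow> nat \<Rightarrow> real \<Rightarrow> bool" where
  "rel_dist_ge C n \<delta> \<longleftrightarrow>
     (\<forall>c\<in>C. \<forall>d\<in>C. c \<noteq> d \<longrightarrow> real (hamming c d) / real n \<ge> \<delta>)"

text \<open>A subsequence is given by its set of positions (symbols are distinguishable positions).
  A common subsequence of w1, w2 is a pair of position sets I, J giving equal words.\<close>
definition common_subseq :: "'a list \<Rightarrow> 'a list \<Rightarrow> nat set \<Rightarrow> nat set \<Rightarrow> bool" where
  "common_subseq w1 w2 I J \<longleftrightarrow>
     I \<subseteq> {..<length w1} \<and> J \<subseteq> {..<length w2} \<and> nths w1 I = nths w2 J"

definition subseq_len :: "nat set \<Rightarrow> nat" where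
  "subseq_len I = card I"

definition span :: "nat set \<Rightarrow> nat" where
  "span I = (if I = {} then 0 else Max I - Min I + 1)"

definition lcs_len :: "'a list \<Rightarrow> 'a list \<Rightarrow> nat" where
  "lcs_len w1 w2 = Sup {subseq_len I | I J. common_subseq w1 w2 I J}"

definition LCS :: "'a list set \<Rightarrow> nat" where
  "LCS C = Sup {lcs_len c d | c d. c \<in> C \<and> d \<in> C \<and> c \<noteq> d}"

end

theory Submission
  imports Defs "HOL-Library.Product_Order"
begin

text \<open>A common subsequence of two concatenated codewords is a monotone matching of positions;
  classify each match by the pair of inner blocks it joins. Matches joining the same block of two
  codewords that agree at that outer position number at most \<open>m\<close> per agreeing position, hence at
  most \<open>\<eta> N\<close>. Every other match joins two distinct inner codewords. Since the matching is
  monotone, the block pairs it visits form a chain in the product order, so there are at most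
  \<open>2 n\<close> of them, and the matches at distinct block pairs occupy disjoint intervals of both words.
  Applying the inner-code hypothesis to each block pair therefore bounds \<open>(k + \<surd>k)\<close> times
  their number by the total span, at most \<open>2 N\<close>, plus \<open>2 n \<theta> k m\<close>.\<close>

lemma sorted_list_of_set_eq_filter_upt:
  assumes "I \<subseteq> {..<n}"
  shows "sorted_list_of_set I = filter (\<lambda>i. i \<in> I) [0..<n]"
proof (rule sorted_distinct_set_unique)
  show "sorted (filter (\<lambda>i. i \<in> I) [0..<n])" by (metis sorted_upt sorted_wrt_filter)
qed (use assms finite_subset[OF assms] in auto)

lemma nths_eq_map_sorted_list_of_set:
  assumes "I \<subseteq> {..<length xs}"
  shows "nths xs I = map ((!) xs) (sorted_list_of_set I)"
proof -
  have "zip xs [0..<length xs] = map (\<lambda>i. (xs ! i, i)) [0..<length xs]"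
    by (rule nth_equalityI) auto
  then show ?thesis
    unfolding nths_def sorted_list_of_set_eq_filter_upt[OF assms] by (simp add: filter_map o_def)
qed

lemma sorted_list_of_set_image_strict_mono_on:
  assumes "finite P" "strict_mono_on P h"
  shows "sorted_list_of_set (h ` P) = map h (sorted_list_of_set P)"
proof (rule strict_sorted_equal)
  have "sorted_wrt (<) (sorted_list_of_set P)" by (simp add: strict_sorted_list_of_set)
  then show "sorted_wrt (<) (map h (sorted_list_of_set P))"
    unfolding sorted_wrt_map
    by (rule sorted_wrt_mono_rel[rotated]) (use assms in \<open>auto simp: strict_mono_on_def\<close>)
qed (use assms(1) in \<open>auto simp: strict_sorted_list_of_set\<close>)

lemma strict_mono_on_nth_sorted_list_of_set:
  "strict_mono_on {..<card I} ((!) (sorted_list_of_set I))"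
  by (rule strict_mono_onI) (simp add: sorted_wrt_nth_less strict_sorted_list_of_set)

lemma common_subseq_matching:
  assumes "common_subseq w w' I J"
  obtains f g where "strict_mono_on {..<card I} f" "strict_mono_on {..<card I} g"
    "\<And>t. t < card I \<Longrightarrow> f t < length w \<and> g t < length w' \<and> w ! f t = w' ! g t"
proof
  define xs where "xs = sorted_list_of_set I"
  define ys where "ys = sorted_list_of_set J"
  have I: "I \<subseteq> {..<length w}" and J: "J \<subseteq> {..<length w'}"
    using assms by (auto simp: common_subseq_def)
  have eq: "map ((!) w) xs = map ((!) w') ys"
    using assms by (simp add: common_subseq_def xs_def ys_def
        nths_eq_map_sorted_list_of_set[OF I] nths_eq_map_sorted_list_of_set[OF J])
  then have card: "card J = card I"
    by (metis length_map length_sorted_list_of_set xs_def ys_def)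
  show "strict_mono_on {..<card I} ((!) xs)" "strict_mono_on {..<card I} ((!) ys)"
    unfolding xs_def ys_def using strict_mono_on_nth_sorted_list_of_set[of J]
    by (simp_all add: card strict_mono_on_nth_sorted_list_of_set)
  fix t assume t: "t < card I"
  have "xs ! t \<in> I" "ys ! t \<in> J"
    using t card I J finite_subset unfolding xs_def ys_def
    by (metis finite_lessThan length_sorted_list_of_set nth_mem set_sorted_list_of_set)+
  moreover have "w ! (xs ! t) = w' ! (ys ! t)"
    using arg_cong[OF eq, of "\<lambda>zs. zs ! t"] t card by (simp add: xs_def ys_def)
  ultimately show "xs ! t < length w \<and> ys ! t < length w' \<and> w ! (xs ! t) = w' ! (ys ! t)"
    using I J by auto
qed

lemma common_subseq_of_matching:
  fixes P :: "'a::linorder set"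
  assumes "finite P" "strict_mono_on P f" "strict_mono_on P g"
    and "f ` P \<subseteq> {..<length v}" "g ` P \<subseteq> {..<length v'}"
    and "\<And>t. t \<in> P \<Longrightarrow> v ! f t = v' ! g t"
  shows "common_subseq v v' (f ` P) (g ` P)"
proof -
  have "nths v (f ` P) = map (\<lambda>t. v ! f t) (sorted_list_of_set P)"
    using assms by (simp add: nths_eq_map_sorted_list_of_set sorted_list_of_set_image_strict_mono_on)
  also have "\<dots> = map (\<lambda>t. v' ! g t) (sorted_list_of_set P)"
    using assms(1,6) by simp
  also have "\<dots> = nths v' (g ` P)"
    using assms by (simp add: nths_eq_map_sorted_list_of_set sorted_list_of_set_image_strict_mono_on)
  finally show ?thesis
    using assms(4,5) by (simp add: common_subseq_def)
qed

lemma span_image_add: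
  assumes "finite X"
  shows "span ((+) c ` X) = span X"
proof (cases "X = {}")
  case False
  have "Max ((\<lambda>x. x + c) ` X) = Max X + c" "Min ((\<lambda>x. x + c) ` X) = Min X + c"
    using Max_add_commute[OF assms False, of id] Min_add_commute[OF assms False, of id] by simp_all
  moreover have "Min X \<le> Max X" using assms False by simp
  ultimately show ?thesis using False by (simp add: span_def add.commute)
qed (simp add: span_def)

lemma span_mod_block:
  assumes "finite X" "\<And>x. x \<in> X \<Longrightarrow> x div m = i"
  shows "span ((\<lambda>x. x mod m) ` X) = span X"
proof -
  have "(+) (i * m) ` (\<lambda>x. x mod m) ` X = (\<lambda>x. x) ` X"
    unfolding image_image by (rule image_cong) (use assms(2) div_mult_mod_eq in auto)
  then show ?thesis using span_image_add[of "(\<lambda>x. x mod m) ` X" "i * m"] assms(1) by simp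
qed

definition separated :: "'a::ord set \<Rightarrow> 'a set \<Rightarrow> bool" where
  "separated X Y \<longleftrightarrow> (\<forall>x\<in>X. \<forall>y\<in>Y. x < y) \<or> (\<forall>x\<in>X. \<forall>y\<in>Y. y < x)"

lemma separated_image:
  assumes "strict_mono_on A f" "X \<subseteq> A" "Y \<subseteq> A" "separated X Y"
  shows "separated (f ` X) (f ` Y)"
  using assms by (auto simp: separated_def strict_mono_on_def subset_eq)

lemma mono_on_fibres_separated:
  fixes p :: "'a::linorder \<Rightarrow> 'b::order"
  assumes "mono_on A p" "s \<noteq> s'"
  shows "separated {t \<in> A. p t = s} {t \<in> A. p t = s'}"
proof (rule ccontr)
  assume "\<not> ?thesis"
  then obtain x y x' y' where "x \<in> A" "y \<in> A" "y \<le> x" "p x = s" "p y = s'"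
    and "x' \<in> A" "y' \<in> A" "x' \<le> y'" "p x' = s" "p y' = s'"
    unfolding separated_def by (auto simp: not_less)
  then have "s' \<le> s" "s \<le> s'" using mono_onD[OF assms(1)] by metis+
  then show False using assms(2) by simp
qed

lemma sum_span_le_of_separated:
  assumes S: "finite S"
    and X: "\<And>s. s \<in> S \<Longrightarrow> X s \<subseteq> {..<N}"
    and sep: "\<And>s s'. s \<in> S \<Longrightarrow> s' \<in> S \<Longrightarrow> s \<noteq> s' \<Longrightarrow> separated (X s) (X s')"
  shows "(\<Sum>s\<in>S. span (X s)) \<le> N"
proof -
  define R where "R s = (if X s = {} then {} else {Min (X s)..Max (X s)})" for s
  have fin: "finite (X s)" if "s \<in> S" for s using X[OF that] finite_subset by blast
  have card_R: "card (R s) = span (X s)" if "s \<in> S" for s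
    using fin[OF that] by (simp add: R_def span_def Suc_diff_le)
  have R_N: "R s \<subseteq> {..<N}" if "s \<in> S" for s
  proof (cases "X s = {}")
    case False
    then have "Max (X s) < N" using X[OF that] Max_in[OF fin[OF that]] by auto
    then show ?thesis by (auto simp: R_def)
  qed (simp add: R_def)
  have "R s \<inter> R s' = {}" if "s \<in> S" "s' \<in> S" "s \<noteq> s'" for s s'
  proof (cases "X s = {} \<or> X s' = {}")
    case False
    then have "Max (X s) \<in> X s" "Min (X s) \<in> X s" "Max (X s') \<in> X s'" "Min (X s') \<in> X s'"
      using fin that by auto
    then have "Max (X s) < Min (X s') \<or> Max (X s') < Min (X s)"
      using sep[OF that] unfolding separated_def by blast
    then show ?thesis using False by (auto simp: R_def)
  qed (auto simp: R_def)
  then have "card (\<Union>s\<in>S. R s) = (\<Sum>s\<in>S. card (R s))"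
    by (intro card_UN_disjoint S) (auto simp: R_def)
  moreover have "card (\<Union>s\<in>S. R s) \<le> N"
    using card_mono[of "{..<N}" "\<Union>s\<in>S. R s"] R_N by auto
  ultimately show ?thesis using card_R by simp
qed

lemma sum_span_fibres_le:
  fixes p :: "'a::linorder \<Rightarrow> 'b::order"
  assumes "finite S" "strict_mono_on A f" "mono_on A p" "f ` A \<subseteq> {..<N}"
  shows "(\<Sum>s\<in>S. span (f ` {t \<in> A. p t = s})) \<le> N"
proof (rule sum_span_le_of_separated)
  fix s s' :: 'b assume "s \<noteq> s'"
  show "separated (f ` {t \<in> A. p t = s}) (f ` {t \<in> A. p t = s'})"
    by (rule separated_image[OF assms(2)]) (auto intro: mono_on_fibres_separated[OF assms(3) \<open>s \<noteq> s'\<close>])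
qed (use assms in auto)

lemma card_chain_le:
  fixes S :: "(nat \<times> nat) set"
  assumes "S \<subseteq> {..<n} \<times> {..<n}" "\<And>p q. p \<in> S \<Longrightarrow> q \<in> S \<Longrightarrow> p \<le> q \<or> q \<le> p"
  shows "card S \<le> 2 * n"
proof -
  have "inj_on (\<lambda>p. fst p + snd p) S"
  proof (rule inj_onI)
    fix p q assume "p \<in> S" "q \<in> S" "fst p + snd p = fst q + snd q"
    then show "p = q" using assms(2)[of p q] by (auto simp: less_eq_prod_def prod_eq_iff)
  qed
  moreover have "(\<lambda>p. fst p + snd p) ` S \<subseteq> {..<2 * n}" using assms(1) by auto
  ultimately show ?thesis using card_inj_on_le[of _ S "{..<2 * n}"] by fastforce
qed

lemma card_div_in_le:
  assumes "inj_on f X" "finite A" "0 < m"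
  shows "card {t \<in> X. f t div m \<in> A} \<le> card A * m"
proof -
  let ?Y = "{t \<in> X. f t div m \<in> A}"
  have "inj_on (\<lambda>t. (f t div m, f t mod m)) ?Y"
  proof (rule inj_onI)
    fix s t assume "s \<in> ?Y" "t \<in> ?Y" "(f s div m, f s mod m) = (f t div m, f t mod m)"
    moreover from this(3) have "f s = f t" by (metis div_mult_mod_eq prod.inject)
    ultimately show "s = t" using assms(1) by (auto dest: inj_onD)
  qed
  moreover have "(\<lambda>t. (f t div m, f t mod m)) ` ?Y \<subseteq> A \<times> {..<m}" using assms(3) by auto
  ultimately have "card ?Y \<le> card (A \<times> {..<m})"
    using assms(2) by (intro card_inj_on_le) auto
  then show ?thesis by (simp add: card_cartesian_product)
qed

lemma length_concat_blocks:
  assumes "\<And>i. i < n \<Longrightarrow> length (F i) = m"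
  shows "length (concat (map F [0..<n])) = n * m"
  using assms by (induction n) auto

lemma nth_concat_blocks:
  assumes "\<And>i. i < n \<Longrightarrow> length (F i) = m" "p < n * m"
  shows "concat (map F [0..<n]) ! p = F (p div m) ! (p mod m)"
  using assms
proof (induction n)
  case (Suc n)
  have len: "length (concat (map F [0..<n])) = n * m"
    using Suc.prems(1) by (intro length_concat_blocks) auto
  show ?case
  proof (cases "p < n * m")
    case False
    then have "p div m = n" using Suc.prems(2)
      by (intro div_nat_eqI) (auto simp: mult.commute)
    moreover have "p - n * m = p mod m"
      using minus_div_mult_eq_mod[of p m] \<open>p div m = n\<close> by simp
    ultimately show ?thesis using False Suc.prems by (simp add: nth_append len)
  qed (use Suc in \<open>simp add: nth_append len\<close>)
qed simp

lemma strict_mono_on_mod_block: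
  fixes f :: "'a::ord \<Rightarrow> nat"
  assumes "strict_mono_on P f" "\<And>t. t \<in> P \<Longrightarrow> f t div m = i"
  shows "strict_mono_on P (\<lambda>t. f t mod m)"
proof (rule strict_mono_onI)
  fix t t' assume "t \<in> P" "t' \<in> P" "t < t'"
  then have "f t < f t'" using strict_mono_onD[OF assms(1)] by blast
  moreover have "f u = i * m + f u mod m" if "u \<in> P" for u
    using assms(2)[OF that] div_mult_mod_eq[of "f u" m] by simp
  ultimately show "f t mod m < f t' mod m"
    using \<open>t \<in> P\<close> \<open>t' \<in> P\<close> by (metis add_less_cancel_left)
qed

definition block_pair :: "nat \<Rightarrow> (nat \<Rightarrow> nat) \<Rightarrow> (nat \<Rightarrow> nat) \<Rightarrow> nat \<Rightarrow> nat \<times> nat" where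
  "block_pair m f g t = (f t div m, g t div m)"

lemma mono_on_block_pair:
  assumes "mono_on A f" "mono_on A g"
  shows "mono_on A (block_pair m f g)"
  using assms by (auto simp: mono_on_def block_pair_def intro: div_le_mono)

lemma common_subseq_block:
  fixes P :: "nat set"
  assumes F: "\<And>i. i < n \<Longrightarrow> length (F i) = m" and G: "\<And>j. j < n \<Longrightarrow> length (G j) = m"
    and P: "finite P" "strict_mono_on P f" "strict_mono_on P g"
    and range: "f ` P \<subseteq> {..<n * m}" "g ` P \<subseteq> {..<n * m}"
    and blocks: "\<And>t. t \<in> P \<Longrightarrow> block_pair m f g t = (i, j)" "i < n" "j < n"
    and match: "\<And>t. t \<in> P \<Longrightarrow> concat (map F [0..<n]) ! f t = concat (map G [0..<n]) ! g t"
  shows "common_subseq (F i) (G j) ((\<lambda>t. f t mod m) ` P) ((\<lambda>t. g t mod m) ` P)"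
proof (rule common_subseq_of_matching[OF P(1)])
  have div: "f t div m = i" "g t div m = j" if "t \<in> P" for t
    using blocks(1)[OF that] by (auto simp: block_pair_def)
  show "strict_mono_on P (\<lambda>t. f t mod m)" "strict_mono_on P (\<lambda>t. g t mod m)"
    using strict_mono_on_mod_block P div by blast+
  have "0 < m" if "t \<in> P" for t using range that by (auto intro: gr0I)
  then show "(\<lambda>t. f t mod m) ` P \<subseteq> {..<length (F i)}" "(\<lambda>t. g t mod m) ` P \<subseteq> {..<length (G j)}"
    using F G blocks(2,3) by auto
  show "F i ! (f t mod m) = G j ! (g t mod m)" if "t \<in> P" for t
  proof -
    have "f t < n * m" "g t < n * m" using range that by auto
    then show ?thesis
      using match[OF that] div[OF that] nth_concat_blocks[of n F m "f t"] nth_concat_blocks[of n G m "g t"] F G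
      by simp
  qed
qed

lemma card_agreements_le:
  assumes "length c = n" "1 - \<eta> \<le> real (hamming c c') / real n"
  shows "real (card {i. i < n \<and> c ! i = c' ! i}) \<le> \<eta> * real n"
proof (cases "n = 0")
  case False
  have "card {i. i < n \<and> c ! i = c' ! i} + hamming c c' = n"
  proof -
    have "{i. i < n \<and> c ! i = c' ! i} \<union> {i. i < n \<and> c ! i \<noteq> c' ! i} = {..<n}" by auto
    then show ?thesis
      unfolding hamming_def assms(1) by (subst card_Un_disjoint[symmetric]) auto
  qed
  then show ?thesis using assms(2) False by (simp add: field_simps)
qed simp

lemma LCS_le:
  assumes "0 \<le> B"
    and "\<And>c d I J. c \<in> C \<Longrightarrow> d \<in> C \<Longrightarrow> c \<noteq> d \<Longrightarrow> common_subseq c d I J \<Longrightarrow> real (card I) \<le> B"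
  shows "real (LCS C) \<le> B"
proof -
  have "lcs_len c d \<le> nat \<lfloor>B\<rfloor>" if "c \<in> C" "d \<in> C" "c \<noteq> d" for c d
    unfolding lcs_len_def
  proof (rule cSup_least)
    have "common_subseq c d {} {}" by (simp add: common_subseq_def)
    then show "{subseq_len I |I J. common_subseq c d I J} \<noteq> {}" by blast
  qed (use assms(2)[OF that] in \<open>auto simp: subseq_len_def le_nat_floor\<close>)
  then have "LCS C \<le> nat \<lfloor>B\<rfloor>"
  proof (cases "{lcs_len c d |c d. c \<in> C \<and> d \<in> C \<and> c \<noteq> d} = {}")
    case True
    show ?thesis unfolding LCS_def True by simp
  qed (auto simp: LCS_def intro!: cSup_least)
  then show ?thesis using assms(1) by linarith
qed

definition distinct_block_pairs :: "nat list \<Rightarrow> nat list \<Rightarrow> (nat \<times> nat) set" where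
  "distinct_block_pairs c c' = {(i, j). (i, c ! i) \<noteq> (j, c' ! j)}"

lemma card_agreeing_block_matches_le:
  assumes "strict_mono_on {..<L} f" "f ` {..<L} \<subseteq> {..<n * m}"
  shows "card {t \<in> {..<L}. block_pair m f g t \<notin> distinct_block_pairs c c'}
    \<le> card {i. i < n \<and> c ! i = c' ! i} * m"
proof (cases "m = 0")
  case False
  let ?A = "{i. i < n \<and> c ! i = c' ! i}"
  have "{t \<in> {..<L}. block_pair m f g t \<notin> distinct_block_pairs c c'} \<subseteq> {t \<in> {..<L}. f t div m \<in> ?A}"
  proof
    fix t assume t: "t \<in> {t \<in> {..<L}. block_pair m f g t \<notin> distinct_block_pairs c c'}"
    then have "f t div m < n" using assms(2) by (auto simp: less_mult_imp_div_less)
    with t show "t \<in> {t \<in> {..<L}. f t div m \<in> ?A}"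
      by (auto simp: distinct_block_pairs_def block_pair_def)
  qed
  then have "card {t \<in> {..<L}. block_pair m f g t \<notin> distinct_block_pairs c c'}
      \<le> card {t \<in> {..<L}. f t div m \<in> ?A}"
    by (intro card_mono) auto
  also have "\<dots> \<le> card ?A * m"
    using False by (intro card_div_in_le strict_mono_on_imp_inj_on assms(1)) auto
  finally show ?thesis .
qed (use assms(2) in auto)

lemma card_matches_in_block_pairs_le:
  fixes K D :: real
  assumes f: "strict_mono_on {..<L} f" and g: "strict_mono_on {..<L} g"
    and range: "f ` {..<L} \<subseteq> {..<n * m}" "g ` {..<L} \<subseteq> {..<n * m}"
    and D: "0 \<le> D"
    and piece: "\<And>s. s \<in> R \<Longrightarrow> s \<in> {..<n} \<times> {..<n} \<Longrightarrow>
       K * card {t \<in> {..<L}. block_pair m f g t = s}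
         \<le> span (f ` {t \<in> {..<L}. block_pair m f g t = s})
           + span (g ` {t \<in> {..<L}. block_pair m f g t = s}) + D"
  shows "K * card {t \<in> {..<L}. block_pair m f g t \<in> R} \<le> 2 * real (n * m) + 2 * real n * D"
proof -
  let ?p = "block_pair m f g"
  let ?fibre = "\<lambda>s. {t \<in> {..<L}. ?p t = s}"
  define S where "S = R \<inter> ?p ` {..<L}"
  have fin: "finite S" by (simp add: S_def)
  have mono: "mono_on {..<L} ?p"
    using mono_on_block_pair strict_mono_on_imp_mono_on f g by blast
  have square: "?p ` {..<L} \<subseteq> {..<n} \<times> {..<n}"
    using range by (auto simp: block_pair_def less_mult_imp_div_less)
  have card_S: "card S \<le> 2 * n"
  proof (rule card_chain_le)
    show "S \<subseteq> {..<n} \<times> {..<n}" using square by (auto simp: S_def)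
    fix p q assume "p \<in> S" "q \<in> S"
    then obtain t t' where "t < L" "t' < L" "p = ?p t" "q = ?p t'" by (auto simp: S_def)
    then show "p \<le> q \<or> q \<le> p" using mono_onD[OF mono] by (metis le_cases lessThan_iff)
  qed
  have "{t \<in> {..<L}. ?p t \<in> R} = (\<Union>s\<in>S. ?fibre s)" by (auto simp: S_def)
  then have "card {t \<in> {..<L}. ?p t \<in> R} = (\<Sum>s\<in>S. card (?fibre s))"
    by (simp only:) (rule card_UN_disjoint[OF fin]; fastforce)
  then have "K * card {t \<in> {..<L}. ?p t \<in> R} = (\<Sum>s\<in>S. K * card (?fibre s))"
    by (simp add: sum_distrib_left)
  also have "\<dots> \<le> (\<Sum>s\<in>S. span (f ` ?fibre s) + span (g ` ?fibre s) + D)"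
  proof (rule sum_mono)
    fix s assume "s \<in> S"
    then have "s \<in> R" "s \<in> {..<n} \<times> {..<n}" using square by (auto simp: S_def)
    then show "K * card (?fibre s) \<le> span (f ` ?fibre s) + span (g ` ?fibre s) + D"
      by (rule piece)
  qed
  also have "\<dots> = (\<Sum>s\<in>S. span (f ` ?fibre s)) + (\<Sum>s\<in>S. span (g ` ?fibre s)) + card S * D"
    by (simp add: sum.distrib)
  also have "\<dots> \<le> n * m + n * m + (2 * n) * D"
  proof -
    have "card S * D \<le> (2 * n) * D"
      using card_S D by (intro mult_right_mono) auto
    then show ?thesis
      using sum_span_fibres_le[OF fin f mono range(1)] sum_span_fibres_le[OF fin g mono range(2)]
      by linarith
  qed
  finally show ?thesis by (simp add: mult.commute)
qed

locale concatenated_code =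
  fixes k Q n m :: nat and \<theta> :: real and e :: "nat \<Rightarrow> nat \<Rightarrow> nat list"
  assumes e_words: "\<And>i \<alpha>. i < n \<Longrightarrow> \<alpha> < Q \<Longrightarrow> e i \<alpha> \<in> words k m"
    and e_inj: "inj_on (\<lambda>(i, \<alpha>). e i \<alpha>) ({0..<n} \<times> {0..<Q})"
    and inner: "\<And>c1 c2 I J. c1 \<in> (\<lambda>(i, \<alpha>). e i \<alpha>) ` ({0..<n} \<times> {0..<Q}) \<Longrightarrow>
                   c2 \<in> (\<lambda>(i, \<alpha>). e i \<alpha>) ` ({0..<n} \<times> {0..<Q}) \<Longrightarrow> c1 \<noteq> c2 \<Longrightarrow>
                   common_subseq c1 c2 I J \<Longrightarrow>
                   real (span I + span J) \<ge> (real k + sqrt (real k)) * real (subseq_len I) - \<theta> * real k * real m"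
begin

definition concat_word :: "nat list \<Rightarrow> nat list" where
  "concat_word c = concat (map (\<lambda>i. e i (c ! i)) [0..<n])"

lemma block_index:
  assumes "c \<in> words Q n" "i < n"
  shows "(i, c ! i) \<in> {0..<n} \<times> {0..<Q}"
proof -
  have "set c \<subseteq> {0..<Q}" "i < length c" using assms by (auto simp: words_def)
  then show ?thesis using assms(2) by (auto dest: nth_mem)
qed

lemma length_block:
  assumes "c \<in> words Q n" "i < n"
  shows "length (e i (c ! i)) = m"
  using e_words block_index[OF assms] by (auto simp: words_def)

lemma length_concat_word: "c \<in> words Q n \<Longrightarrow> length (concat_word c) = n * m"
  unfolding concat_word_def by (rule length_concat_blocks) (rule length_block)

lemma block_pair_matches_le:
  assumes c: "c \<in> words Q n" and c': "c' \<in> words Q n"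
    and f: "strict_mono_on {..<L} f" and g: "strict_mono_on {..<L} g"
    and range: "f ` {..<L} \<subseteq> {..<n * m}" "g ` {..<L} \<subseteq> {..<n * m}"
    and match: "\<And>t. t < L \<Longrightarrow> concat_word c ! f t = concat_word c' ! g t"
    and ij: "i < n" "j < n" "(i, j) \<in> distinct_block_pairs c c'"
  defines "P \<equiv> {t \<in> {..<L}. block_pair m f g t = (i, j)}"
  shows "(real k + sqrt (real k)) * card P \<le> span (f ` P) + span (g ` P) + \<theta> * k * m"
proof -
  have P: "finite P" "P \<subseteq> {..<L}" by (auto simp: P_def)
  have fP: "strict_mono_on P f" and gP: "strict_mono_on P g"
    using monotone_on_subset[OF f P(2)] monotone_on_subset[OF g P(2)] .
  have div: "f t div m = i" "g t div m = j" if "t \<in> P" for t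
    using that by (auto simp: P_def block_pair_def)
  let ?I = "(\<lambda>t. f t mod m) ` P" and ?J = "(\<lambda>t. g t mod m) ` P"
  have "common_subseq (e i (c ! i)) (e j (c' ! j)) ?I ?J"
  proof (rule common_subseq_block[where F = "\<lambda>i. e i (c ! i)" and G = "\<lambda>i. e i (c' ! i)"])
    show "length (e i' (c ! i')) = m" "length (e i' (c' ! i')) = m" if "i' < n" for i'
      using length_block c c' that by blast+
    show "f ` P \<subseteq> {..<n * m}" using range(1) P(2) by blast
    show "g ` P \<subseteq> {..<n * m}" using range(2) P(2) by blast
    show "block_pair m f g t = (i, j)" if "t \<in> P" for t using that by (simp add: P_def)
    show "concat (map (\<lambda>i. e i (c ! i)) [0..<n]) ! f t = concat (map (\<lambda>i. e i (c' ! i)) [0..<n]) ! g t"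
      if "t \<in> P" for t
      using match that by (auto simp: P_def concat_word_def)
  qed (use P fP gP ij in auto)
  moreover have "e i (c ! i) \<in> (\<lambda>(i, \<alpha>). e i \<alpha>) ` ({0..<n} \<times> {0..<Q})"
    "e j (c' ! j) \<in> (\<lambda>(i, \<alpha>). e i \<alpha>) ` ({0..<n} \<times> {0..<Q})"
    using block_index[OF c ij(1)] block_index[OF c' ij(2)] by (auto intro: image_eqI)
  moreover have "e i (c ! i) \<noteq> e j (c' ! j)"
    using inj_onD[OF e_inj _ block_index[OF c ij(1)] block_index[OF c' ij(2)]] ij(3)
    by (auto simp: distinct_block_pairs_def)
  ultimately have "(real k + sqrt (real k)) * card ?I \<le> span ?I + span ?J + \<theta> * k * m"
    using inner unfolding subseq_len_def by fastforce
  moreover have "card ((\<lambda>t. f t mod m) ` P) = card P"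
    by (intro card_image strict_mono_on_imp_inj_on strict_mono_on_mod_block[OF fP div(1)])
  moreover have "span ((\<lambda>x. x mod m) ` f ` P) = span (f ` P)"
    by (rule span_mod_block) (use P(1) div in auto)
  then have "span ?I = span (f ` P)" by (simp add: image_image)
  moreover have "span ((\<lambda>x. x mod m) ` g ` P) = span (g ` P)"
    by (rule span_mod_block) (use P(1) div in auto)
  then have "span ?J = span (g ` P)" by (simp add: image_image)
  ultimately show ?thesis by simp
qed

lemma card_distinct_block_matches_le:
  assumes c: "c \<in> words Q n" and c': "c' \<in> words Q n"
    and f: "strict_mono_on {..<L} f" and g: "strict_mono_on {..<L} g"
    and range: "f ` {..<L} \<subseteq> {..<n * m}" "g ` {..<L} \<subseteq> {..<n * m}"
    and match: "\<And>t. t < L \<Longrightarrow> concat_word c ! f t = concat_word c' ! g t"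
    and "0 \<le> \<theta>"
  shows "(real k + sqrt (real k)) * card {t \<in> {..<L}. block_pair m f g t \<in> distinct_block_pairs c c'}
    \<le> 2 * real (n * m) + 2 * real n * (\<theta> * k * m)"
proof (rule card_matches_in_block_pairs_le[OF f g range])
  fix s assume s: "s \<in> distinct_block_pairs c c'" "s \<in> {..<n} \<times> {..<n}"
  then obtain i j where "s = (i, j)" "i < n" "j < n" by blast
  then show "(real k + sqrt (real k)) * card {t \<in> {..<L}. block_pair m f g t = s}
      \<le> span (f ` {t \<in> {..<L}. block_pair m f g t = s})
        + span (g ` {t \<in> {..<L}. block_pair m f g t = s}) + \<theta> * k * m"
    using block_pair_matches_le[OF c c' f g range match] s(1) by simp
qed (use assms(8) in simp)

lemma card_common_subseq_le:
  fixes \<eta> :: real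
  assumes "0 < k" "0 \<le> \<theta>"
    and c: "c \<in> words Q n" and c': "c' \<in> words Q n"
    and agree: "real (card {i. i < n \<and> c ! i = c' ! i}) \<le> \<eta> * real n"
    and cs: "common_subseq (concat_word c) (concat_word c') I J"
  shows "real (card I) \<le> (2 / (real k + sqrt (real k)) + 2 * \<theta> + \<eta>) * real (n * m)"
proof -
  define K where "K = real k + sqrt (real k)"
  have K: "real k \<le> K" "0 < K" using assms(1) by (auto simp: K_def add_pos_nonneg)
  define L where "L = card I"
  obtain f g where f: "strict_mono_on {..<L} f" and g: "strict_mono_on {..<L} g"
    and fg: "\<And>t. t < L \<Longrightarrow> f t < n * m \<and> g t < n * m \<and> concat_word c ! f t = concat_word c' ! g t"
    using common_subseq_matching[OF cs] length_concat_word[OF c] length_concat_word[OF c']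
    unfolding L_def by metis
  have range: "f ` {..<L} \<subseteq> {..<n * m}" "g ` {..<L} \<subseteq> {..<n * m}"
    and match: "\<And>t. t < L \<Longrightarrow> concat_word c ! f t = concat_word c' ! g t"
    using fg by auto
  let ?good = "{t \<in> {..<L}. block_pair m f g t \<notin> distinct_block_pairs c c'}"
  let ?bad = "{t \<in> {..<L}. block_pair m f g t \<in> distinct_block_pairs c c'}"
  have "card ?good \<le> card {i. i < n \<and> c ! i = c' ! i} * m"
    by (rule card_agreeing_block_matches_le[OF f range(1)])
  then have "real (card ?good) \<le> real (card {i. i < n \<and> c ! i = c' ! i}) * real m"
    by (simp only: of_nat_mult[symmetric] of_nat_le_iff)
  also have "\<dots> \<le> \<eta> * real n * real m"
    using agree by (simp add: mult_right_mono)
  finally have good: "real (card ?good) \<le> \<eta> * real (n * m)" by simp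
  have bad: "K * card ?bad \<le> 2 * real (n * m) + 2 * real n * (\<theta> * k * m)"
    unfolding K_def by (rule card_distinct_block_matches_le[OF c c' f g range match assms(2)])
  have "?good \<union> ?bad = {..<L}" by auto
  then have split: "real L = card ?good + card ?bad"
    by (metis (no_types, lifting) card_Un_disjoint card_lessThan disjoint_iff finite_Un
        finite_lessThan mem_Collect_eq of_nat_add)
  have theta_K: "2 * real n * (\<theta> * k * m) \<le> 2 * \<theta> * K * real (n * m)"
  proof -
    have "real k * (2 * \<theta> * real (n * m)) \<le> K * (2 * \<theta> * real (n * m))"
      using K assms(2) by (intro mult_right_mono) auto
    then show ?thesis by (simp add: algebra_simps)
  qed
  have "K * L = K * card ?good + K * card ?bad"
    unfolding split by (simp only: of_nat_add distrib_left)
  also have "\<dots> \<le> K * (\<eta> * real (n * m)) + (2 * real (n * m) + 2 * \<theta> * K * real (n * m))"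
    using good bad theta_K K(2) by (intro add_mono mult_left_mono) auto
  also have "\<dots> = K * ((2 / K + 2 * \<theta> + \<eta>) * real (n * m))"
    using K(2) by (simp add: field_simps)
  finally show ?thesis
    using K(2) by (simp add: L_def K_def mult_le_cancel_left_pos)
qed

end

theorem lemma5p1:
  fixes \<eta> \<theta> :: real and k Q n m :: nat
    and C_out :: "nat list set" and e :: "nat \<Rightarrow> nat \<Rightarrow> nat list"
  assumes eta: "0 < \<eta>" "\<eta> \<le> 1"
    and theta: "0 < \<theta>" "\<theta> \<le> 1"
    and k: "k \<ge> 2"
    and Cout: "C_out \<subseteq> words Q n"
    and dist: "rel_dist_ge C_out n (1 - \<eta>)"
    and e_words: "\<And>i \<alpha>. i < n \<Longrightarrow> \<alpha> < Q \<Longrightarrow> e i \<alpha> \<in> words k m"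
    and e_inj: "inj_on (\<lambda>(i, \<alpha>). e i \<alpha>) ({0..<n} \<times> {0..<Q})"
    and inner: "\<And>c1 c2 I J. c1 \<in> (\<lambda>(i, \<alpha>). e i \<alpha>) ` ({0..<n} \<times> {0..<Q}) \<Longrightarrow>
                   c2 \<in> (\<lambda>(i, \<alpha>). e i \<alpha>) ` ({0..<n} \<times> {0..<Q}) \<Longrightarrow> c1 \<noteq> c2 \<Longrightarrow>
                   common_subseq c1 c2 I J \<Longrightarrow>
                   real (span I + span J) \<ge> (real k + sqrt (real k)) * real (subseq_len I) - \<theta> * real k * real m"
  shows "real (LCS ((\<lambda>c. concat (map (\<lambda>i. e i (c ! i)) [0..<n])) ` C_out))
           \<le> (2 / (real k + sqrt (real k)) + 2 * \<theta> + \<eta>) * real (n * m)"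
proof -
  interpret concatenated_code k Q n m \<theta> e
    using e_words e_inj inner by unfold_locales
  have concat_word: "(\<lambda>c. concat (map (\<lambda>i. e i (c ! i)) [0..<n])) = concat_word"
    by (simp add: fun_eq_iff concat_word_def)
  show ?thesis
    unfolding concat_word
  proof (rule LCS_le)
    show "0 \<le> (2 / (real k + sqrt (real k)) + 2 * \<theta> + \<eta>) * real (n * m)"
      using eta theta by simp
    fix w w' I J assume "w \<in> concat_word ` C_out" "w' \<in> concat_word ` C_out" "w \<noteq> w'"
      and cs: "common_subseq w w' I J"
    then obtain c c' where c: "c \<in> C_out" "c' \<in> C_out" "c \<noteq> c'"
      and w: "w = concat_word c" "w' = concat_word c'" by blast
    have "real (card {i. i < n \<and> c ! i = c' ! i}) \<le> \<eta> * real n"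
      using card_agreements_le dist c Cout by (auto simp: rel_dist_ge_def words_def)
    then show "real (card I) \<le> (2 / (real k + sqrt (real k)) + 2 * \<theta> + \<eta>) * real (n * m)"
      using card_common_subseq_le[of c c' \<eta> I J] cs w c Cout k eta theta by auto
  qed
qed

end
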